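(* There exist an environment $E$ and a total preorder $\succeq$ on $\Pi^E$ such that $\succeq\in\mathrm{Ord}_{\mathrm{RRL}}(E)$ but $\succeq\notin\mathrm{Ord}_{\mathrm{ONMR}}(E)$.
   Context: An environment is a tuple $E=(\mathcal S,\mathcal A,\mathcal T,\mathcal I)$ where $\mathcal S,\mathcal A$ are finite nonempty sets, $\mathcal T:\mathcal S\times\mathcal A\to\Delta(\mathcal S)$ and $\mathcal I\in\Delta(\mathcal S)$. A policy is a map $\pi:\mathcal S\to\Delta(\mathcal A)$ (stationary, possibly stochastic); $\Pi^E$ denotes the set of all policies. A trajectory $\xi=(s_0,a_0,s_1,a_1,\dots)$ is generated under $\pi$ by $s_0\sim\mathcal I$, $a_t\sim\pi(s_t)$, $s_{t+1}\sim\mathcal T(s_t,a_t)$; $\mathbb E^\pi_\xi$ denotes expectation under this distribution. An objective-specification formalism $X$ assigns to each environment $E$ a set of objective specifications, each inducing a total preorder $\succeq$ on $\Pi^E$; $\mathrm{Ord}_X(E)$ is the set of total preorders so induced. A specification defining a scalar $J:\Pi^E\to\mathbb R$ induces $\pi_1\succeq\pi_2\iff J(\pi_1)\ge J(\pi_2)$. RRL: specification $(\mathcal R,\alpha,F,\gamma)$ with $\mathcal R:\mathcal S\times\mathcal A\times\mathcal S\to\mathbb R$, $\alpha\in\mathbb R$, $F:\Delta(\mathcal A)\to\mathbb R$, $\gamma\in[0,1)$; $J(\pi)=\mathbb E^\pi_\xi[\sum_{t=0}^\infty\gamma^t(\mathcal R(s_t,a_t,s_{t+1})-\alpha F(\pi(s_t)))]$.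 ONMR: specification $(\mathcal R,f,\gamma)$ with $\mathcal R:\mathcal S\times\mathcal A\times\mathcal S\to\mathbb R$, $f:\mathbb R\to\mathbb R$, $\gamma\in[0,1)$; $J(\pi)=f\big(\mathbb E^\pi_\xi[\sum_{t=0}^\infty\gamma^t\mathcal R(s_t,a_t,s_{t+1})]\big)$. *)

theory Defs
  imports "HOL-Probability.Probability_Mass_Function"
begin

(* An environment over finite state type 's and finite action type 'a:
   transition T :: 's => 'a => 's pmf, initial distribution I :: 's pmf. *)

type_synonym ('s,'a) policy = "'s \<Rightarrow> 'a pmf"

primrec state_dist ::
  "('s \<Rightarrow> 'a \<Rightarrow> 's pmf) \<Rightarrow> 's pmf \<Rightarrow> ('s,'a) policy \<Rightarrow> nat \<Rightarrow> 's pmf" where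
  "state_dist T I \<pi> 0 = I"
| "state_dist T I \<pi> (Suc t) =
     bind_pmf (state_dist T I \<pi> t) (\<lambda>s. bind_pmf (\<pi> s) (\<lambda>a. T s a))"

definition step_reward ::
  "('s \<Rightarrow> 'a \<Rightarrow> 's pmf) \<Rightarrow> ('s,'a) policy \<Rightarrow> ('s \<Rightarrow> 'a \<Rightarrow> 's \<Rightarrow> real) \<Rightarrow> 's \<Rightarrow> real" where
  "step_reward T \<pi> R s =
     measure_pmf.expectation (\<pi> s)
       (\<lambda>a. measure_pmf.expectation (T s a) (\<lambda>s'. R s a s'))"

definition RRL_J ::
  "('s \<Rightarrow> 'a \<Rightarrow> 's pmf) \<Rightarrow> 's pmf \<Rightarrow> ('s \<Rightarrow> 'a \<Rightarrow> 's \<Rightarrow> real) \<Rightarrow> real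
    \<Rightarrow> ('a pmf \<Rightarrow> real) \<Rightarrow> real \<Rightarrow> ('s,'a) policy \<Rightarrow> real" where
  "RRL_J T I R \<alpha> F \<gamma> \<pi> =
     (\<Sum>t. \<gamma> ^ t * measure_pmf.expectation (state_dist T I \<pi> t)
              (\<lambda>s. step_reward T \<pi> R s - \<alpha> * F (\<pi> s)))"

definition disc_return ::
  "('s \<Rightarrow> 'a \<Rightarrow> 's pmf) \<Rightarrow> 's pmf \<Rightarrow> ('s \<Rightarrow> 'a \<Rightarrow> 's \<Rightarrow> real) \<Rightarrow> real
    \<Rightarrow> ('s,'a) policy \<Rightarrow> real" where
  "disc_return T I R \<gamma> \<pi> =
     (\<Sum>t. \<gamma> ^ t * measure_pmf.expectation (state_dist T I \<pi> t) (\<lambda>s. step_reward T \<pi> R s))"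

definition ONMR_J ::
  "('s \<Rightarrow> 'a \<Rightarrow> 's pmf) \<Rightarrow> 's pmf \<Rightarrow> ('s \<Rightarrow> 'a \<Rightarrow> 's \<Rightarrow> real) \<Rightarrow> (real \<Rightarrow> real)
    \<Rightarrow> real \<Rightarrow> ('s,'a) policy \<Rightarrow> real" where
  "ONMR_J T I R f \<gamma> \<pi> = f (disc_return T I R \<gamma> \<pi>)"

definition induced_order :: "(('s,'a) policy \<Rightarrow> real) \<Rightarrow> ('s,'a) policy \<Rightarrow> ('s,'a) policy \<Rightarrow> bool" where
  "induced_order J = (\<lambda>\<pi>1 \<pi>2. J \<pi>1 \<ge> J \<pi>2)"

definition Ord_RRL ::
  "('s \<Rightarrow> 'a \<Rightarrow> 's pmf) \<Rightarrow> 's pmf \<Rightarrow> (('s,'a) policy \<Rightarrow> ('s,'a) policy \<Rightarrow> bool) set" where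
  "Ord_RRL T I = {ord. \<exists>R \<alpha> F \<gamma>. 0 \<le> \<gamma> \<and> \<gamma> < 1 \<and>
                          ord = induced_order (RRL_J T I R \<alpha> F \<gamma>)}"

definition Ord_ONMR ::
  "('s \<Rightarrow> 'a \<Rightarrow> 's pmf) \<Rightarrow> 's pmf \<Rightarrow> (('s,'a) policy \<Rightarrow> ('s,'a) policy \<Rightarrow> bool) set" where
  "Ord_ONMR T I = {ord. \<exists>R f \<gamma>. 0 \<le> \<gamma> \<and> \<gamma> < 1 \<and>
                          ord = induced_order (ONMR_J T I R f \<gamma>)}"

definition total_preorder_rel :: "('p \<Rightarrow> 'p \<Rightarrow> bool) \<Rightarrow> bool" where
  "total_preorder_rel r \<longleftrightarrow> (\<forall>x. r x x) \<and> (\<forall>x y z. r x y \<longrightarrow> r y z \<longrightarrow> r x z)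
                           \<and> (\<forall>x y. r x y \<or> r y x)"

end

theory Submission
  imports Defs
begin

(* Let the transitions and the initial distribution be a fair coin on two states,
   independent of the action. Every state is then uniformly distributed at all times, so
   a policy taking action True with probability u in state True and v in state False has
   a discounted return that is affine in (u, v). An order induced by an ONMR objective
   therefore ties all such policies along a segment in a level set of that affine map,
   and every objective inducing the same order is constant there. The RRL objective with
   zero reward, regulariser -(pmf d True)^2 and discount 0 is (u^2 + v^2) / 2, which is
   strictly convex and so constant on no segment. *)

lemma total_preorder_induced_order: "total_preorder_rel (induced_order J)"
  unfolding total_preorder_rel_def induced_order_def by auto

lemma induced_order_eq_imp_ties:
  assumes "induced_order J = induced_order (\<lambda>\<pi>. f (G \<pi>))" and "G \<pi>1 = G \<pi>2"
  shows "J \<pi>1 = J \<pi>2"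
proof -
  have "induced_order J \<pi>1 \<pi>2" "induced_order J \<pi>2 \<pi>1"
    unfolding assms(1) by (simp_all add: induced_order_def assms(2))
  then show ?thesis unfolding induced_order_def by simp
qed

lemma state_dist_const_transition: "state_dist (\<lambda>_ _. I) I \<pi> t = I"
  by (induction t) simp_all

lemma disc_return_const_transition:
  assumes "0 \<le> \<gamma>" "\<gamma> < 1"
  shows "disc_return (\<lambda>_ _. I) I R \<gamma> \<pi> =
           measure_pmf.expectation I (step_reward (\<lambda>_ _. I) \<pi> R) / (1 - \<gamma>)"
proof -
  have "summable (\<lambda>t. \<gamma> ^ t)" using assms by simp
  then show ?thesis
    unfolding disc_return_def state_dist_const_transition
    using assms by (simp add: suminf_mult2[symmetric] suminf_geometric)
qed

lemma RRL_J_discount_zero: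
  "RRL_J T I R \<alpha> F 0 \<pi> =
     measure_pmf.expectation I (\<lambda>s. step_reward T \<pi> R s - \<alpha> * F (\<pi> s))"
proof -
  have "(\<Sum>t. (0::real) ^ t * X t) = X 0" for X
    by (subst suminf_finite[of "{0}"]) auto
  then show ?thesis unfolding RRL_J_def by simp
qed

definition fair_coin :: "bool pmf" where
  "fair_coin = bernoulli_pmf (1/2)"

definition bernoulli_policy :: "real \<Rightarrow> real \<Rightarrow> (bool, bool) policy" where
  "bernoulli_policy u v = (\<lambda>s. bernoulli_pmf (if s then u else v))"

lemma expectation_fair_coin:
  "measure_pmf.expectation fair_coin g = (g True + g False) / (2 :: real)"
  unfolding fair_coin_def by simp

lemma disc_return_bernoulli_policy_affine:
  assumes "0 \<le> \<gamma>" "\<gamma> < 1"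
  obtains a b c where
    "\<And>u v. u \<in> {0..1} \<Longrightarrow> v \<in> {0..1} \<Longrightarrow>
       disc_return (\<lambda>_ _. fair_coin) fair_coin R \<gamma> (bernoulli_policy u v) = a * u + b * v + c"
proof -
  define \<rho> where "\<rho> s a = measure_pmf.expectation fair_coin (R s a)" for s a
  have "disc_return (\<lambda>_ _. fair_coin) fair_coin R \<gamma> (bernoulli_policy u v) =
          ((\<rho> True True - \<rho> True False) * u + (\<rho> False True - \<rho> False False) * v
            + \<rho> True False + \<rho> False False) / (2 * (1 - \<gamma>))"
    if "u \<in> {0..1}" "v \<in> {0..1}" for u v
    using that unfolding disc_return_const_transition[OF assms] step_reward_def
      bernoulli_policy_def expectation_fair_coin[of "step_reward _ _ _"] \<rho>_def
    by (simp add: field_simps)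
  then show ?thesis
    by (intro that[of "(\<rho> True True - \<rho> True False) / (2 * (1 - \<gamma>))"
          "(\<rho> False True - \<rho> False False) / (2 * (1 - \<gamma>))"
          "(\<rho> True False + \<rho> False False) / (2 * (1 - \<gamma>))"])
      (simp add: add_divide_distrib)
qed

definition squared_bias_objective :: "(bool, bool) policy \<Rightarrow> real" where
  "squared_bias_objective =
     RRL_J (\<lambda>_ _. fair_coin) fair_coin (\<lambda>_ _ _. 0) (-1) (\<lambda>d. (pmf d True)\<^sup>2) 0"

lemma squared_bias_objective_bernoulli_policy:
  assumes "u \<in> {0..1}" "v \<in> {0..1}"
  shows "squared_bias_objective (bernoulli_policy u v) = (u\<^sup>2 + v\<^sup>2) / 2"
  using assms unfolding squared_bias_objective_def RRL_J_discount_zero step_reward_def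
    bernoulli_policy_def expectation_fair_coin
  by simp

lemma small_kernel_vector:
  fixes a b :: real
  obtains p q where "a * p + b * q = 0" "p\<^sup>2 + q\<^sup>2 > 0" "\<bar>p\<bar> \<le> 1/2" "\<bar>q\<bar> \<le> 1/2"
proof (cases "a = 0 \<and> b = 0")
  case True
  then show ?thesis by (intro that[of "1/2" 0]) auto
next
  case False
  define m where "m = 2 * max \<bar>a\<bar> \<bar>b\<bar>"
  have "m > 0" using False unfolding m_def by auto
  then show ?thesis
    using False by (intro that[of "b / m" "- a / m"])
      (auto simp: m_def abs_divide field_simps sum_power2_gt_zero_iff)
qed

lemma squared_bias_order_not_ONMR:
  "induced_order squared_bias_objective \<notin> Ord_ONMR (\<lambda>_ _. fair_coin) fair_coin"
proof
  let ?J = squared_bias_objective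
  let ?x = "\<lambda>p q. bernoulli_policy (1/2 + p) (1/2 + q)"
  assume "induced_order ?J \<in> Ord_ONMR (\<lambda>_ _. fair_coin) fair_coin"
  then obtain R f \<gamma> where \<gamma>: "0 \<le> \<gamma>" "\<gamma> < 1" and ord:
    "induced_order ?J = induced_order (\<lambda>\<pi>. f (disc_return (\<lambda>_ _. fair_coin) fair_coin R \<gamma> \<pi>))"
    unfolding Ord_ONMR_def ONMR_J_def by auto
  obtain a b c where return: "\<And>u v. u \<in> {0..1} \<Longrightarrow> v \<in> {0..1} \<Longrightarrow>
      disc_return (\<lambda>_ _. fair_coin) fair_coin R \<gamma> (bernoulli_policy u v) = a * u + b * v + c"
    using disc_return_bernoulli_policy_affine[OF \<gamma>] by blast
  obtain p q where pq: "a * p + b * q = 0" "p\<^sup>2 + q\<^sup>2 > 0" "\<bar>p\<bar> \<le> 1/2" "\<bar>q\<bar> \<le> 1/2"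
    using small_kernel_vector by blast
  have range: "1/2 + s \<in> {0..1}" "1/2 - s \<in> {0..1}" if "\<bar>s\<bar> \<le> 1/2" for s :: real
    using that by auto
  have ties: "?J (?x p q) = ?J (?x 0 0)" "?J (?x (- p) (- q)) = ?J (?x 0 0)"
    using pq range[of p] range[of q] range[of 0]
    by (auto intro!: induced_order_eq_imp_ties[where f = f, OF ord] simp: return algebra_simps)
  have "?J (?x p q) + ?J (?x (- p) (- q)) = 2 * ?J (?x 0 0) + (p\<^sup>2 + q\<^sup>2)"
    using pq range[of p] range[of q]
    by (simp add: squared_bias_objective_bernoulli_policy power2_eq_square field_simps)
  then show False using ties pq(2) by simp
qed

theorem mainTheorem18:
  shows "\<exists>(T :: bool \<Rightarrow> bool \<Rightarrow> bool pmf) (I :: bool pmf)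
           (ord :: (bool, bool) policy \<Rightarrow> (bool, bool) policy \<Rightarrow> bool).
           total_preorder_rel ord \<and> ord \<in> Ord_RRL T I \<and> ord \<notin> Ord_ONMR T I"
proof (intro exI conjI)
  show "total_preorder_rel (induced_order squared_bias_objective)"
    by (rule total_preorder_induced_order)
  show "induced_order squared_bias_objective \<in> Ord_RRL (\<lambda>_ _. fair_coin) fair_coin"
    unfolding Ord_RRL_def squared_bias_objective_def
    by (intro CollectI exI[of _ "\<lambda>_ _ _. 0"] exI[of _ "-1"] exI[of _ "\<lambda>d. (pmf d True)\<^sup>2"]
        exI[of _ 0]) simp
  show "induced_order squared_bias_objective \<notin> Ord_ONMR (\<lambda>_ _. fair_coin) fair_coin"
    by (rule squared_bias_order_not_ONMR)
qed

end
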